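(* There exist constants $c>0$ and $b>1$ such that for every even $n\ge 2$ there exist a zero-one knapsack instance with $n$ items (positive integer weights $w_i$, integer profits $v_i$) and a capacity $W$ such that the number of optimal solutions with capacity $W$ is at least $c\,b^n$ (i.e. exponential in $n$), whereas with capacity $W'=W+1$ the instance has exactly one optimal solution.
   Context: For a zero-one knapsack instance with items $[n]=\{1,\dots,n\}$ and capacity $W$, for $s\subseteq[n]$ let $w(s)=\sum_{i\in s}w_i$ and $v(s)=\sum_{i\in s}v_i$. The feasible solutions are $\mathcal{S}=\{s\subseteq[n]: w(s)\le W\}$, and the optimal solutions are $\mathcal{S}^*=\{s\in\mathcal{S}: v(s)=\max_{t\in\mathcal{S}}v(t)\}$. *)

theory Defs
  imports Complex_Main
begin

definition ks_weight :: "(nat \<Rightarrow> int) \<Rightarrow> nat set \<Rightarrow> int" where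
  "ks_weight w s = (\<Sum>i\<in>s. w i)"

definition ks_value :: "(nat \<Rightarrow> int) \<Rightarrow> nat set \<Rightarrow> int" where
  "ks_value v s = (\<Sum>i\<in>s. v i)"

definition ks_feasible :: "nat \<Rightarrow> (nat \<Rightarrow> int) \<Rightarrow> int \<Rightarrow> nat set set" where
  "ks_feasible n w W = {s. s \<subseteq> {1..n} \<and> ks_weight w s \<le> W}"

definition ks_optimal :: "nat \<Rightarrow> (nat \<Rightarrow> int) \<Rightarrow> (nat \<Rightarrow> int) \<Rightarrow> int \<Rightarrow> nat set set" where
  "ks_optimal n w v W =
     {s \<in> ks_feasible n w W. \<forall>t \<in> ks_feasible n w W. ks_value v t \<le> ks_value v s}"

end

theory Submission
  imports Defs
begin

text \<open>Take \<open>n = 2k + 2\<close> items: items \<open>1, \<dots>, n - 1\<close> have weight and profit 1, item \<open>n\<close>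
  has weight \<open>k + 1\<close> and profit \<open>n\<close>. With capacity \<open>k\<close> item \<open>n\<close> does not fit, so every
  \<open>k\<close>-subset of the light items is optimal, and there are \<open>(2k + 1 choose k) \<ge> 2\<^sup>k\<close> of them.
  With capacity \<open>k + 1\<close> item \<open>n\<close> alone has profit \<open>n\<close>, more than all light items together,
  and no light item fits beside it.\<close>

lemma two_pow_le_binomial:
  assumes "2 * k \<le> n"
  shows "2 ^ k \<le> n choose k"
proof (cases "k = 0")
  case False
  have "(2::real) ^ k \<le> (real n / real k) ^ k"
    using assms False by (intro power_mono) (simp_all add: field_simps)
  also have "\<dots> \<le> real (n choose k)"
    using assms by (intro binomial_ge_n_over_k_pow_k) simp
  finally show ?thesis
    by (metis of_nat_le_iff of_nat_numeral of_nat_power)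
qed simp

lemma finite_ks_optimal: "finite (ks_optimal n w v W)"
  by (rule finite_subset[of _ "Pow {1..n}"]) (auto simp: ks_optimal_def ks_feasible_def)

definition unit_except :: "nat \<Rightarrow> int \<Rightarrow> nat \<Rightarrow> int" where
  "unit_except n x i = (if i = n then x else 1)"

lemma sum_unit_except:
  assumes "finite t"
  shows "sum (unit_except n x) t = int (card (t - {n})) + (if n \<in> t then x else 0)"
proof -
  have "sum (unit_except n x) (t - {n}) = int (card (t - {n}))"
    by (simp add: unit_except_def)
  then show ?thesis
    using sum_diff1[OF assms, of "unit_except n x" n] by (simp add: unit_except_def split: if_splits)
qed

lemma ks_weight_unit_except:
  "t \<subseteq> {1..n} \<Longrightarrow> ks_weight (unit_except n x) t = int (card (t - {n})) + (if n \<in> t then x else 0)"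
  unfolding ks_weight_def by (rule sum_unit_except) (rule finite_subset, auto)

lemma ks_value_unit_except:
  "t \<subseteq> {1..n} \<Longrightarrow> ks_value (unit_except n x) t = int (card (t - {n})) + (if n \<in> t then x else 0)"
  unfolding ks_value_def by (rule sum_unit_except) (rule finite_subset, auto)

lemma ks_optimal_unit_except_light:
  assumes "int k < a"
  shows "{s. s \<subseteq> {1..<n} \<and> card s = k} \<subseteq> ks_optimal n (unit_except n a) (unit_except n p) (int k)"
proof
  fix s assume s: "s \<in> {s. s \<subseteq> {1..<n} \<and> card s = k}"
  then have s_sub: "s \<subseteq> {1..n}" and n_notin_s: "n \<notin> s" by auto
  have "s \<in> ks_feasible n (unit_except n a) (int k)"
    using s s_sub n_notin_s ks_weight_unit_except[OF s_sub] by (simp add: ks_feasible_def)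
  moreover have "ks_value (unit_except n p) t \<le> ks_value (unit_except n p) s"
    if t: "t \<in> ks_feasible n (unit_except n a) (int k)" for t
  proof -
    have t_sub: "t \<subseteq> {1..n}" and t_fits: "ks_weight (unit_except n a) t \<le> int k"
      using t by (auto simp: ks_feasible_def)
    then have "n \<notin> t"
      using assms ks_weight_unit_except[OF t_sub] by (auto split: if_splits)
    then show ?thesis
      using t_fits s n_notin_s ks_weight_unit_except[OF t_sub]
        ks_value_unit_except[OF t_sub] ks_value_unit_except[OF s_sub] by simp
  qed
  ultimately show "s \<in> ks_optimal n (unit_except n a) (unit_except n p) (int k)"
    by (simp add: ks_optimal_def)
qed

lemma ks_optimal_unit_except_heavy:
  assumes "n \<ge> 1" and "int n \<le> p"
  shows "ks_optimal n (unit_except n a) (unit_except n p) a = {{n}}"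
proof -
  let ?F = "ks_feasible n (unit_except n a) a"
  have n_sub: "{n} \<subseteq> {1..n}" using assms(1) by simp
  have n_feasible: "{n} \<in> ?F"
    using n_sub ks_weight_unit_except[OF n_sub] by (simp add: ks_feasible_def)
  have n_value: "ks_value (unit_except n p) {n} = p"
    using ks_value_unit_except[OF n_sub] by simp
  have beaten: "ks_value (unit_except n p) t < p" if t: "t \<in> ?F" "t \<noteq> {n}" for t
  proof -
    have t_sub: "t \<subseteq> {1..n}" and t_fits: "ks_weight (unit_except n a) t \<le> a"
      using t by (auto simp: ks_feasible_def)
    show ?thesis
    proof (cases "n \<in> t")
      case True
      then have "card (t - {n}) = 0"
        using t_fits ks_weight_unit_except[OF t_sub] by simp
      moreover have "finite t" using t_sub finite_subset by blast
      ultimately have "t = {n}" using True by (metis card_0_eq finite_Diff insert_Diff)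
      then show ?thesis using t(2) by contradiction
    next
      case False
      then have "t \<subseteq> {1..<n}"
        using t_sub by (auto simp: subset_iff le_less)
      then have "card t \<le> card {1..<n}"
        by (intro card_mono) auto
      then show ?thesis
        using False assms ks_value_unit_except[OF t_sub] by simp
    qed
  qed
  show ?thesis
    unfolding ks_optimal_def using n_feasible n_value beaten by fastforce
qed

theorem theorem4:
  shows "\<exists>(c::real) (b::real). c > 0 \<and> b > 1 \<and>
    (\<forall>n::nat. even n \<and> n \<ge> 2 \<longrightarrow>
      (\<exists>(w::nat \<Rightarrow> int) (v::nat \<Rightarrow> int) (W::int).
         (\<forall>i\<in>{1..n}. w i > 0) \<and>
         real (card (ks_optimal n w v W)) \<ge> c * b ^ n \<and>
         card (ks_optimal n w v (W + 1)) = 1))"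
proof (rule exI[of _ "1/2"], rule exI[of _ "sqrt 2"], intro conjI allI impI)
  fix n :: nat assume "even n \<and> n \<ge> 2"
  then obtain j where "n = 2 * j" and "j \<ge> 1" by auto
  then obtain k where n: "n = 2 * k + 2"
    by (intro that[of "j - 1"]) simp
  define w where "w = unit_except n (int k + 1)"
  define v where "v = unit_except n (int n)"
  have "(1/2) * sqrt 2 ^ n = real (2 ^ k)"
    by (simp add: n power_add power_mult)
  also have "\<dots> \<le> real ((n - 1) choose k)"
    using two_pow_le_binomial[of k "n - 1"] n by simp
  also have "\<dots> = real (card {s. s \<subseteq> {1..<n} \<and> card s = k})"
    by (simp add: n_subsets)
  also have "\<dots> \<le> real (card (ks_optimal n w v (int k)))"
    unfolding w_def v_def
    by (intro of_nat_mono card_mono finite_ks_optimal ks_optimal_unit_except_light) simp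
  finally have "(1/2) * sqrt 2 ^ n \<le> real (card (ks_optimal n w v (int k)))" .
  moreover have "ks_optimal n w v (int k + 1) = {{n}}"
    unfolding w_def v_def using n by (intro ks_optimal_unit_except_heavy) simp_all
  moreover have "\<forall>i\<in>{1..n}. w i > 0"
    by (simp add: w_def unit_except_def)
  ultimately show "\<exists>w v W. (\<forall>i\<in>{1..n}. w i > 0) \<and>
      real (card (ks_optimal n w v W)) \<ge> 1/2 * sqrt 2 ^ n \<and> card (ks_optimal n w v (W + 1)) = 1"
    by (intro exI[of _ w] exI[of _ v] exI[of _ "int k"]) simp
qed simp_all

end
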